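(* For the two-state-service-rate queue described in the context, assumed positive recurrent, the generating function $g$ satisfies, for all $|z|\le1$, $$u\,g(rz)=-(z-z^+)(z-z^-)\,g(z)-vz+w,$$ where $$z^\pm=\frac{1}{2\lambda}\Bigl(\mu_a+\mu_b+\lambda+\gamma\pm\sqrt{\Delta}\Bigr),\qquad \Delta=(\lambda-\gamma+\mu_a-\mu_b)^2+4\lambda\gamma,$$ and $$\lambda^2u=\lambda_a(\mu_a-\mu_b),\qquad \lambda^2v=(\lambda_a\mu_a+\lambda_b\mu_b)\pi_0,\qquad \lambda^2w=(\mu_a\mu_b+\lambda_a\mu_a+\lambda_b\mu_b+\gamma\mu_a)\pi_0.$$
   Context: Two-state-service-rate queue. Fix parameters $\lambda_a,\lambda_b>0$, $\delta>0$, $\gamma\ge0$, $\mu_a,\mu_b>0$. Set $\lambda=\lambda_a+\lambda_b$, $r=\lambda/(\lambda+\delta)$, and for $n\ge1$, $p_n=\frac{\lambda_a}{\lambda}r^n$ and $\bar p_n=1-p_n$. Consider the continuous-time Markov chain on the state space $\{0\}\cup\{(n,a),(n,b):n\ge1\}$ with the following transitions: from $0$ to $(1,a)$ at rate $\lambda_a$ and to $(1,b)$ at rate $\lambda_b$; for $n\ge1$ and $c\in\{a,b\}$, from $(n,c)$ to $(n+1,c)$ at rate $\lambda$; from $(1,c)$ to $0$ at rate $\mu_c$; for $n\ge1$ and $c\in\{a,b\}$, from $(n+1,c)$ to $(n,a)$ at rate $\mu_c p_n$ and to $(n,b)$ at rate $\mu_c\bar p_n$; for $n\ge1$, from $(n,b)$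 to $(n,a)$ at rate $\gamma$. When the chain is positive recurrent, $\pi$ denotes its stationary distribution and $\pi_0=\pi(0)$, $\pi_n^a=\pi((n,a))$, $\pi_n^b=\pi((n,b))$, $\pi_n=\pi_n^a+\pi_n^b$ for $n\ge1$. Generating functions: $g_a(z)=\sum_{n\ge1}\pi_n^az^n$, $g_b(z)=\sum_{n\ge1}\pi_n^bz^n$, $g(z)=\pi_0+g_a(z)+g_b(z)$. *)

theory Defs
  imports "HOL-Analysis.Analysis"
begin

text \<open>States of the chain: Empty is state 0, Qa n is (n,a), Qb n is (n,b);
  only n \<ge> 1 is a genuine state.\<close>
datatype st = Empty | Qa nat | Qb nat

definition states :: "st set" where
  "states = {Empty} \<union> {Qa n | n. n \<ge> 1} \<union> {Qb n | n. n \<ge> 1}"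

definition pr :: "real \<Rightarrow> real \<Rightarrow> real \<Rightarrow> nat \<Rightarrow> real" where
  "pr la lb d n = la / (la + lb) * ((la + lb) / (la + lb + d)) ^ n"

fun rate :: "real \<Rightarrow> real \<Rightarrow> real \<Rightarrow> real \<Rightarrow> real \<Rightarrow> real \<Rightarrow> st \<Rightarrow> st \<Rightarrow> real" where
  "rate la lb d g ma mb Empty Empty = 0"
| "rate la lb d g ma mb Empty (Qa m) = (if m = 1 then la else 0)"
| "rate la lb d g ma mb Empty (Qb m) = (if m = 1 then lb else 0)"
| "rate la lb d g ma mb (Qa n) Empty = (if n = 1 then ma else 0)"
| "rate la lb d g ma mb (Qb n) Empty = (if n = 1 then mb else 0)"
| "rate la lb d g ma mb (Qa n) (Qa m) =
     (if m = n + 1 then la + lb else 0) + (if n = m + 1 then ma * pr la lb d m else 0)"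
| "rate la lb d g ma mb (Qa n) (Qb m) =
     (if n = m + 1 then ma * (1 - pr la lb d m) else 0)"
| "rate la lb d g ma mb (Qb n) (Qb m) =
     (if m = n + 1 then la + lb else 0) + (if n = m + 1 then mb * (1 - pr la lb d m) else 0)"
| "rate la lb d g ma mb (Qb n) (Qa m) =
     (if n = m + 1 then mb * pr la lb d m else 0) + (if m = n then g else 0)"

definition stationary ::
  "real \<Rightarrow> real \<Rightarrow> real \<Rightarrow> real \<Rightarrow> real \<Rightarrow> real \<Rightarrow> (st \<Rightarrow> real) \<Rightarrow> bool" where
  "stationary la lb d g ma mb \<pi> \<longleftrightarrow>
     (\<forall>s\<in>states. \<pi> s \<ge> 0) \<and> (\<pi> has_sum 1) states \<and>
     (\<forall>j\<in>states. (\<Sum>\<^sub>\<infinity>i\<in>states. \<pi> i * rate la lb d g ma mb i j)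
                   = \<pi> j * (\<Sum>\<^sub>\<infinity>k\<in>states. rate la lb d g ma mb j k))"

definition gcoef :: "(st \<Rightarrow> real) \<Rightarrow> nat \<Rightarrow> real" where
  "gcoef \<pi> n = (if n = 0 then \<pi> Empty else \<pi> (Qa n) + \<pi> (Qb n))"

definition genfun :: "(st \<Rightarrow> real) \<Rightarrow> complex \<Rightarrow> complex" where
  "genfun \<pi> z = (\<Sum>n. complex_of_real (gcoef \<pi> n) * z ^ n)"

end

theory Submission
  imports Defs
begin

(* Write l = la + lb, G_n = pi_n (with G_0 = pi_0) and split the empty-state mass
   into virtual phase masses la/l pi_0 and lb/l pi_0 at level 0.  With the service flux
   F_n = ma pi_n^a + mb pi_n^b the balance equations of the levels n >= 1 then take a
   uniform shape, and summing the two phases telescopes into the cut equations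
   F_{n+1} = l G_n.  Eliminating the phase split from the phase-a balance equation with
   these cut equations gives a three-term recurrence for G_n, whose boundary terms at
   n = 0 and n = 1 are exactly w and v.  Multiplying by z^n and summing (the series
   converge absolutely on the closed unit disc) yields
       u g(rz) = -(z^2 - s z + P) g(z) - v z + w,
   and z^+, z^- are the two roots of z^2 - s z + P (Vieta). *)

section \<open>The state space and the rate sums\<close>

lemma states_cases:
  assumes "x \<in> states"
  obtains "x = Empty" | m where "m \<ge> 1" "x = Qa m" | m where "m \<ge> 1" "x = Qb m"
  using assms unfolding states_def by auto

lemma in_states [simp]:
  "Empty \<in> states" "Qa m \<in> states \<longleftrightarrow> m \<ge> 1" "Qb m \<in> states \<longleftrightarrow> m \<ge> 1"
  unfolding states_def by auto

lemma infsum_states_finite_support: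
  assumes "finite F" "F \<subseteq> states" "\<And>x. x \<in> states \<Longrightarrow> x \<notin> F \<Longrightarrow> f x = 0"
  shows "infsum f states = sum f F"
proof -
  have "infsum f states = infsum f F"
    by (rule infsum_cong_neutral) (use assms in auto)
  then show ?thesis using assms(1) by simp
qed

lemma outflow_Empty: "(\<Sum>\<^sub>\<infinity>k\<in>states. rate la lb d g ma mb Empty k) = la + lb"
  by (subst infsum_states_finite_support[of "{Qa 1, Qb 1}"])
     (auto elim!: states_cases split: if_splits simp: eval_nat_numeral)

lemma outflow_Qa:
  assumes "n \<ge> 1"
  shows "(\<Sum>\<^sub>\<infinity>k\<in>states. rate la lb d g ma mb (Qa n) k) = la + lb + ma"
proof (cases "n = 1")
  case True
  then show ?thesis
    by (subst infsum_states_finite_support[of "{Empty, Qa 2}"])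
       (auto elim!: states_cases split: if_splits simp: eval_nat_numeral)
next
  case False
  then show ?thesis using assms
    by (subst infsum_states_finite_support[of "{Qa (n+1), Qa (n-1), Qb (n-1)}"])
       (auto elim!: states_cases split: if_splits simp: algebra_simps eval_nat_numeral)
qed

lemma outflow_Qb:
  assumes "n \<ge> 1"
  shows "(\<Sum>\<^sub>\<infinity>k\<in>states. rate la lb d g ma mb (Qb n) k) = la + lb + mb + g"
proof (cases "n = 1")
  case True
  then show ?thesis
    by (subst infsum_states_finite_support[of "{Empty, Qb 2, Qa 1}"])
       (auto elim!: states_cases split: if_splits simp: eval_nat_numeral)
next
  case False
  then show ?thesis using assms
    by (subst infsum_states_finite_support[of "{Qb (n+1), Qb (n-1), Qa (n-1), Qa n}"])
       (auto elim!: states_cases split: if_splits simp: algebra_simps eval_nat_numeral)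
qed

lemma inflow_Empty:
  "(\<Sum>\<^sub>\<infinity>i\<in>states. \<pi> i * rate la lb d g ma mb i Empty) = ma * \<pi> (Qa 1) + mb * \<pi> (Qb 1)"
  by (subst infsum_states_finite_support[of "{Qa 1, Qb 1}"])
     (auto elim!: states_cases split: if_splits simp: eval_nat_numeral)

lemma inflow_Qa:
  assumes "n \<ge> 1"
  shows "(\<Sum>\<^sub>\<infinity>i\<in>states. \<pi> i * rate la lb d g ma mb i (Qa n)) =
     (if n = 1 then la * \<pi> Empty else (la + lb) * \<pi> (Qa (n-1)))
     + pr la lb d n * (ma * \<pi> (Qa (n+1)) + mb * \<pi> (Qb (n+1))) + g * \<pi> (Qb n)"
proof (cases "n = 1")
  case True
  then show ?thesis
    by (subst infsum_states_finite_support[of "{Empty, Qa 2, Qb 2, Qb 1}"])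
       (auto elim!: states_cases split: if_splits simp: algebra_simps eval_nat_numeral)
next
  case False
  then show ?thesis using assms
    by (subst infsum_states_finite_support[of "{Qa (n-1), Qa (n+1), Qb (n+1), Qb n}"])
       (auto elim!: states_cases split: if_splits simp: algebra_simps eval_nat_numeral)
qed

lemma inflow_Qb:
  assumes "n \<ge> 1"
  shows "(\<Sum>\<^sub>\<infinity>i\<in>states. \<pi> i * rate la lb d g ma mb i (Qb n)) =
     (if n = 1 then lb * \<pi> Empty else (la + lb) * \<pi> (Qb (n-1)))
     + (1 - pr la lb d n) * (ma * \<pi> (Qa (n+1)) + mb * \<pi> (Qb (n+1)))"
proof (cases "n = 1")
  case True
  then show ?thesis
    by (subst infsum_states_finite_support[of "{Empty, Qb 2, Qa 2}"])
       (auto elim!: states_cases split: if_splits simp: algebra_simps eval_nat_numeral)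
next
  case False
  then show ?thesis using assms
    by (subst infsum_states_finite_support[of "{Qb (n-1), Qb (n+1), Qa (n+1)}"])
       (auto elim!: states_cases split: if_splits simp: algebra_simps eval_nat_numeral)
qed

section \<open>Balance and cut equations\<close>

text \<open>At level 0 the empty-state mass is split in
  the proportion of the arrival types; this is what the level-1 balance equations see,
  so all levels n \<ge> 1 obey balance equations of the same form.\<close>
definition phase_a :: "real \<Rightarrow> real \<Rightarrow> (st \<Rightarrow> real) \<Rightarrow> nat \<Rightarrow> real" where
  "phase_a la lb \<pi> n = (if n = 0 then la / (la + lb) * \<pi> Empty else \<pi> (Qa n))"

definition phase_b :: "real \<Rightarrow> real \<Rightarrow> (st \<Rightarrow> real) \<Rightarrow> nat \<Rightarrow> real" where
  "phase_b la lb \<pi> n = (if n = 0 then lb / (la + lb) * \<pi> Empty else \<pi> (Qb n))"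

definition flux :: "real \<Rightarrow> real \<Rightarrow> real \<Rightarrow> real \<Rightarrow> (st \<Rightarrow> real) \<Rightarrow> nat \<Rightarrow> real" where
  "flux la lb ma mb \<pi> n = ma * phase_a la lb \<pi> n + mb * phase_b la lb \<pi> n"

text \<open>Elimination of the phase split: the phase-a balance equation at a level with
  masses (a, b), combined with the total mass G and the flux \<open>l G1\<close> of that level and
  the masses (c, e) and flux F of the level below, becomes a relation between the
  totals G, G1 and F alone.\<close>
lemma eliminate_phase_split:
  fixes a b c e G G1 F R l ma mb g :: real
  assumes "G = a + b" "ma * a + mb * b = l * G1" "G1 = c + e" "F = ma * c + mb * e"
    and "a * (l + ma) = l * c + R * G + g * b"
  shows "R * (ma - mb) * G = - l * F + l * (ma + mb + l + g) * G1 - (l * mb + ma * mb + g * ma) * G"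
  using assms by algebra

definition seq_delay :: "(nat \<Rightarrow> 'a::zero) \<Rightarrow> nat \<Rightarrow> 'a" where
  "seq_delay f n = (if n = 0 then 0 else f (n - 1))"

context
  fixes la lb d g ma mb :: real and \<pi> :: "st \<Rightarrow> real"
  assumes arrivals_pos: "la + lb > 0"
    and stat: "stationary la lb d g ma mb \<pi>"
begin

lemma balance:
  "j \<in> states \<Longrightarrow> (\<Sum>\<^sub>\<infinity>i\<in>states. \<pi> i * rate la lb d g ma mb i j)
     = \<pi> j * (\<Sum>\<^sub>\<infinity>k\<in>states. rate la lb d g ma mb j k)"
  using stat unfolding stationary_def by blast

lemma gcoef_phases: "gcoef \<pi> n = phase_a la lb \<pi> n + phase_b la lb \<pi> n"
proof -
  have "la / (la + lb) * \<pi> Empty + lb / (la + lb) * \<pi> Empty = \<pi> Empty"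
    using arrivals_pos by (simp add: add_divide_distrib[symmetric] distrib_right[symmetric])
  then show ?thesis by (simp add: gcoef_def phase_a_def phase_b_def)
qed

lemma balance_Empty: "flux la lb ma mb \<pi> 1 = (la + lb) * gcoef \<pi> 0"
  using balance[of Empty] by (simp add: inflow_Empty outflow_Empty flux_def phase_a_def
      phase_b_def gcoef_def algebra_simps)

lemma balance_phase_a:
  assumes "n \<ge> 1"
  shows "phase_a la lb \<pi> n * (la + lb + ma) = (la + lb) * phase_a la lb \<pi> (n-1)
     + pr la lb d n * flux la lb ma mb \<pi> (n+1) + g * phase_b la lb \<pi> n"
proof -
  have previous: "(la + lb) * phase_a la lb \<pi> (n-1)
      = (if n = 1 then la * \<pi> Empty else (la + lb) * \<pi> (Qa (n-1)))"
    using arrivals_pos assms by (simp add: phase_a_def)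
  have "\<pi> (Qa n) * (la + lb + ma) = (if n = 1 then la * \<pi> Empty else (la + lb) * \<pi> (Qa (n-1)))
      + pr la lb d n * (ma * \<pi> (Qa (n+1)) + mb * \<pi> (Qb (n+1))) + g * \<pi> (Qb n)"
    using balance[of "Qa n"] assms by (simp add: inflow_Qa outflow_Qa)
  then show ?thesis
    using assms unfolding previous[symmetric] by (simp add: flux_def phase_a_def phase_b_def)
qed

lemma balance_phase_b:
  assumes "n \<ge> 1"
  shows "phase_b la lb \<pi> n * (la + lb + mb + g) = (la + lb) * phase_b la lb \<pi> (n-1)
     + (1 - pr la lb d n) * flux la lb ma mb \<pi> (n+1)"
proof -
  have previous: "(la + lb) * phase_b la lb \<pi> (n-1)
      = (if n = 1 then lb * \<pi> Empty else (la + lb) * \<pi> (Qb (n-1)))"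
    using arrivals_pos assms by (simp add: phase_b_def)
  have "\<pi> (Qb n) * (la + lb + mb + g) = (if n = 1 then lb * \<pi> Empty else (la + lb) * \<pi> (Qb (n-1)))
      + (1 - pr la lb d n) * (ma * \<pi> (Qa (n+1)) + mb * \<pi> (Qb (n+1)))"
    using balance[of "Qb n"] assms by (simp add: inflow_Qb outflow_Qb)
  then show ?thesis
    using assms unfolding previous[symmetric] by (simp add: flux_def phase_a_def phase_b_def)
qed

text \<open>Adding the two phase balance equations of level n+1
  shows that \<open>flux (n+1) - l G_n\<close> does not depend on n.\<close>
lemma cut_equation: "flux la lb ma mb \<pi> (Suc n) = (la + lb) * gcoef \<pi> n"
proof (induction n)
  case 0
  then show ?case using balance_Empty by simp
next
  case (Suc n)
  have "phase_a la lb \<pi> (Suc n) * (la + lb + ma) + phase_b la lb \<pi> (Suc n) * (la + lb + mb + g)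
      = (la + lb) * gcoef \<pi> n + flux la lb ma mb \<pi> (Suc (Suc n)) + g * phase_b la lb \<pi> (Suc n)"
    using balance_phase_a[of "Suc n"] balance_phase_b[of "Suc n"]
    by (simp add: gcoef_phases algebra_simps)
  then show ?case
    using Suc.IH by (simp add: flux_def gcoef_phases algebra_simps)
qed

text \<open>The virtual phase masses at level 0 produce the flux that yields the constant v.\<close>
lemma flux_zero: "(la + lb) * flux la lb ma mb \<pi> 0 = (la * ma + lb * mb) * \<pi> Empty"
proof -
  have "flux la lb ma mb \<pi> 0 = (la * ma + lb * mb) * \<pi> Empty / (la + lb)"
    by (simp add: flux_def phase_a_def phase_b_def add_divide_distrib algebra_simps)
  then show ?thesis using arrivals_pos by simp
qed

lemma level_recurrence:
  assumes "n \<ge> 1"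
  shows "(la + lb) * pr la lb d n * (ma - mb) * gcoef \<pi> n =
    - (la + lb) * flux la lb ma mb \<pi> (n-1) + (la + lb) * (ma + mb + (la + lb) + g) * gcoef \<pi> (n-1)
    - ((la + lb) * mb + ma * mb + g * ma) * gcoef \<pi> n"
proof (rule eliminate_phase_split)
  show "gcoef \<pi> n = phase_a la lb \<pi> n + phase_b la lb \<pi> n"
    "gcoef \<pi> (n-1) = phase_a la lb \<pi> (n-1) + phase_b la lb \<pi> (n-1)"
    by (simp_all add: gcoef_phases)
  show "ma * phase_a la lb \<pi> n + mb * phase_b la lb \<pi> n = (la + lb) * gcoef \<pi> (n-1)"
    using cut_equation[of "n-1"] assms by (simp add: flux_def)
  show "flux la lb ma mb \<pi> (n-1) = ma * phase_a la lb \<pi> (n-1) + mb * phase_b la lb \<pi> (n-1)"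
    by (simp add: flux_def)
  show "phase_a la lb \<pi> n * (la + lb + ma) = (la + lb) * phase_a la lb \<pi> (n-1)
      + (la + lb) * pr la lb d n * gcoef \<pi> n + g * phase_b la lb \<pi> n"
    using balance_phase_a[OF assms] cut_equation[of n] by simp
qed

text \<open>The recurrence normalised by \<open>l\<^sup>2\<close>, extended to all n \<ge> 0: the boundary
  cases n = 0 and n = 1 produce the constants w and v.\<close>
lemma coefficient_identity:
  assumes hu: "(la + lb)^2 * u = la * (ma - mb)"
    and hv: "(la + lb)^2 * v = (la * ma + lb * mb) * \<pi> Empty"
    and hw: "(la + lb)^2 * w = (ma * mb + la * ma + lb * mb + g * ma) * \<pi> Empty"
  shows "u * ((la + lb) / (la + lb + d))^n * gcoef \<pi> n =
     - seq_delay (seq_delay (gcoef \<pi>)) n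
     + (ma + mb + (la + lb) + g) / (la + lb) * seq_delay (gcoef \<pi>) n
     - ((la + lb) * mb + ma * mb + g * ma) / (la + lb)^2 * gcoef \<pi> n
     - (if n = 1 then v else 0) + (if n = 0 then w else 0)"
    (is "?lhs = ?rhs")
proof -
  define l where "l = la + lb"
  have l_pos: "l > 0" using arrivals_pos by (simp add: l_def)
  have scaled_pr: "l * pr la lb d k = la * (l / (l + d))^k" for k
    using l_pos by (simp add: pr_def l_def)
  have "l^2 * ?lhs = (l^2 * u) * (l / (l + d))^n * gcoef \<pi> n"
    by (simp add: l_def)
  also have "\<dots> = l * pr la lb d n * (ma - mb) * gcoef \<pi> n"
    unfolding hu[folded l_def] scaled_pr by simp
  also have "\<dots> = - (l^2) * seq_delay (seq_delay (gcoef \<pi>)) n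
      + l * (ma + mb + l + g) * seq_delay (gcoef \<pi>) n
      - (l * mb + ma * mb + g * ma) * gcoef \<pi> n
      - (if n = 1 then l^2 * v else 0) + (if n = 0 then l^2 * w else 0)"
  proof (cases n)
    case 0
    then show ?thesis
      using hw unfolding scaled_pr by (simp add: seq_delay_def gcoef_def l_def algebra_simps)
  next
    case (Suc m)
    have flux_below: "l * flux la lb ma mb \<pi> m
        = l^2 * seq_delay (seq_delay (gcoef \<pi>)) n + (if n = 1 then l^2 * v else 0)"
    proof (cases m)
      case 0
      then show ?thesis using Suc flux_zero hv by (simp add: seq_delay_def l_def)
    next
      case (Suc k)
      then show ?thesis
        using \<open>n = Suc m\<close> cut_equation[of k] by (simp add: seq_delay_def l_def power2_eq_square)
    qed
    have "seq_delay (gcoef \<pi>) n = gcoef \<pi> m" using Suc by (simp add: seq_delay_def)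
    then show ?thesis
      using level_recurrence[of n, folded l_def] Suc flux_below by (simp add: algebra_simps)
  qed
  also have "\<dots> = l^2 * ?rhs"
    using l_pos unfolding l_def[symmetric] by (simp add: field_simps power2_eq_square)
  finally show ?thesis using l_pos by simp
qed

end

section \<open>The generating function\<close>

lemma sums_seq_delay:
  fixes f :: "nat \<Rightarrow> 'a::real_normed_field"
  assumes "(\<lambda>n. f n * z^n) sums S"
  shows "(\<lambda>n. seq_delay f n * z^n) sums (z * S)"
proof -
  have "(\<lambda>n. z * (f n * z^n)) sums (z * S)" using sums_mult[OF assms] .
  then have "(\<lambda>n. seq_delay f (Suc n) * z^(Suc n)) sums (z * S)"
    by (simp add: seq_delay_def algebra_simps)
  then show ?thesis by (subst (asm) sums_Suc_iff) (simp add: seq_delay_def)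
qed

lemma summable_enumerated_masses:
  fixes \<pi> :: "st \<Rightarrow> real" and Q :: "nat \<Rightarrow> st"
  assumes "\<pi> summable_on states" "\<And>s. s \<in> states \<Longrightarrow> \<pi> s \<ge> 0"
    and "inj Q" "\<And>n. n \<ge> 1 \<Longrightarrow> Q n \<in> states"
  shows "summable (\<lambda>n. \<pi> (Q (Suc n)))"
proof -
  have "\<pi> summable_on Q ` {1..}"
    by (rule summable_on_subset_banach[OF assms(1)]) (use assms(4) in auto)
  then have "(\<pi> \<circ> Q) summable_on {1..}"
    using summable_on_reindex[of Q "{1..}" \<pi>] assms(3) by (simp add: inj_on_def inj_def)
  then have "(\<lambda>n. if n = 0 then 0 else \<pi> (Q n)) summable_on UNIV"
    by (rule summable_on_cong_neutral[THEN iffD1, rotated -1]) auto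
  then have "summable (\<lambda>n. if n = 0 then 0 else \<pi> (Q n))"
    by (subst (asm) summable_on_UNIV_nonneg_real_iff) (use assms(2,4) in auto)
  then show ?thesis by (subst (asm) summable_Suc_iff[symmetric]) simp
qed

lemma genfun_sums:
  assumes stat: "stationary la lb d g ma mb \<pi>" and z: "cmod z \<le> 1"
  shows "(\<lambda>n. complex_of_real (gcoef \<pi> n) * z^n) sums genfun \<pi> z"
proof -
  have nonneg: "\<And>s. s \<in> states \<Longrightarrow> \<pi> s \<ge> 0" and "\<pi> summable_on states"
    using stat unfolding stationary_def by (auto simp: summable_on_def)
  then have "summable (\<lambda>n. \<pi> (Qa (Suc n)))" "summable (\<lambda>n. \<pi> (Qb (Suc n)))"
    by (auto intro!: summable_enumerated_masses simp: inj_def)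
  then have "summable (\<lambda>n. gcoef \<pi> (Suc n))"
    by (simp add: gcoef_def summable_add)
  then have summable_coef: "summable (gcoef \<pi>)" by (simp add: summable_Suc_iff)
  have coef_nonneg: "gcoef \<pi> n \<ge> 0" for n
    using nonneg by (simp add: gcoef_def)
  have "norm (complex_of_real (gcoef \<pi> n) * z^n) \<le> gcoef \<pi> n" for n
  proof -
    have "norm (complex_of_real (gcoef \<pi> n) * z^n) = gcoef \<pi> n * cmod z ^ n"
      using coef_nonneg[of n] by (simp add: norm_mult norm_power)
    also have "\<dots> \<le> gcoef \<pi> n"
      using coef_nonneg[of n] z by (simp add: mult_left_le power_le_one)
    finally show ?thesis .
  qed
  then have "summable (\<lambda>n. complex_of_real (gcoef \<pi> n) * z^n)"
    by (intro summable_comparison_test[OF _ summable_coef]) auto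
  then show ?thesis unfolding genfun_def by (rule summable_sums)
qed

lemma functional_equation_expanded:
  fixes z :: complex
  assumes arrivals_pos: "la + lb > 0" and "d \<ge> 0"
    and stat: "stationary la lb d g ma mb \<pi>"
    and hu: "(la + lb)^2 * u = la * (ma - mb)"
    and hv: "(la + lb)^2 * v = (la * ma + lb * mb) * \<pi> Empty"
    and hw: "(la + lb)^2 * w = (ma * mb + la * ma + lb * mb + g * ma) * \<pi> Empty"
    and z: "cmod z \<le> 1"
  defines "r \<equiv> (la + lb) / (la + lb + d)"
    and "s \<equiv> (ma + mb + (la + lb) + g) / (la + lb)"
    and "P \<equiv> ((la + lb) * mb + ma * mb + g * ma) / (la + lb)^2"
  shows "complex_of_real u * genfun \<pi> (complex_of_real r * z)
     = - (z^2 - complex_of_real s * z + complex_of_real P) * genfun \<pi> z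
       - complex_of_real v * z + complex_of_real w"
proof -
  define c where "c n = complex_of_real (gcoef \<pi> n)" for n
  define Gz where "Gz = genfun \<pi> z"
  have "0 \<le> r" "r \<le> 1"
    using arrivals_pos \<open>d \<ge> 0\<close> by (simp_all add: r_def)
  then have "cmod (complex_of_real r * z) \<le> 1"
    using z by (simp add: norm_mult mult_le_one)
  then have lhs_sums: "(\<lambda>n. complex_of_real u * (c n * (complex_of_real r * z)^n))
      sums (complex_of_real u * genfun \<pi> (complex_of_real r * z))"
    unfolding c_def by (intro sums_mult genfun_sums[OF stat])
  have series: "(\<lambda>n. c n * z^n) sums Gz"
    unfolding c_def Gz_def by (rule genfun_sums[OF stat z])
  have "(\<lambda>n. - (seq_delay (seq_delay c) n * z^n) + complex_of_real s * (seq_delay c n * z^n)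
       - complex_of_real P * (c n * z^n)
       - (if n = 1 then complex_of_real v * z^n else 0)
       + (if n = 0 then complex_of_real w * z^n else 0))
     sums (- (z * (z * Gz)) + complex_of_real s * (z * Gz) - complex_of_real P * Gz
       - complex_of_real v * z^1 + complex_of_real w * z^0)"
    by (intro sums_add sums_diff sums_minus sums_mult sums_seq_delay series sums_single)
  moreover have "complex_of_real u * (c n * (complex_of_real r * z)^n) =
      - (seq_delay (seq_delay c) n * z^n) + complex_of_real s * (seq_delay c n * z^n)
       - complex_of_real P * (c n * z^n)
       - (if n = 1 then complex_of_real v * z^n else 0)
       + (if n = 0 then complex_of_real w * z^n else 0)" for n
  proof -
    have delays: "seq_delay c k = complex_of_real (seq_delay (gcoef \<pi>) k)"
      "seq_delay (seq_delay c) k = complex_of_real (seq_delay (seq_delay (gcoef \<pi>)) k)" for k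
      by (simp_all add: c_def seq_delay_def)
    have "complex_of_real u * (c n * (complex_of_real r * z)^n)
        = complex_of_real (u * r^n * gcoef \<pi> n) * z^n"
      by (simp add: c_def power_mult_distrib)
    also have "\<dots> = complex_of_real (- seq_delay (seq_delay (gcoef \<pi>)) n
        + s * seq_delay (gcoef \<pi>) n - P * gcoef \<pi> n
        - (if n = 1 then v else 0) + (if n = 0 then w else 0)) * z^n"
      using coefficient_identity[OF arrivals_pos stat hu hv hw, where n = n]
      unfolding r_def s_def P_def by simp
    also have "\<dots> = - (seq_delay (seq_delay c) n * z^n) + complex_of_real s * (seq_delay c n * z^n)
       - complex_of_real P * (c n * z^n)
       - (if n = 1 then complex_of_real v * z^n else 0)
       + (if n = 0 then complex_of_real w * z^n else 0)"
      by (simp add: delays c_def algebra_simps)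
    finally show ?thesis .
  qed
  ultimately have "complex_of_real u * genfun \<pi> (complex_of_real r * z)
      = - (z * (z * Gz)) + complex_of_real s * (z * Gz) - complex_of_real P * Gz
        - complex_of_real v * z^1 + complex_of_real w * z^0"
    using lhs_sums by (simp add: sums_unique2)
  then show ?thesis by (simp add: Gz_def power2_eq_square algebra_simps)
qed

lemma quadratic_root_factorization:
  fixes B D l :: real and z :: complex
  assumes "D \<ge> 0" "l \<noteq> 0"
  shows "(z - complex_of_real ((B + sqrt D) / (2 * l))) * (z - complex_of_real ((B - sqrt D) / (2 * l)))
     = z^2 - complex_of_real (B / l) * z + complex_of_real ((B^2 - D) / (4 * l^2))"
proof -
  define x y where "x = (B + sqrt D) / (2 * l)" and "y = (B - sqrt D) / (2 * l)"
  have sum: "x + y = B / l" using assms(2) by (simp add: x_def y_def field_simps)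
  have "x * y = (B^2 - (sqrt D)^2) / (4 * l^2)"
    by (simp add: x_def y_def field_simps power2_eq_square)
  then have product: "x * y = (B^2 - D) / (4 * l^2)" using assms(1) by simp
  have "(z - complex_of_real x) * (z - complex_of_real y)
      = z^2 - complex_of_real (x + y) * z + complex_of_real (x * y)"
    by (simp add: algebra_simps power2_eq_square)
  then show ?thesis unfolding sum product by (simp add: x_def y_def)
qed

theorem proposition2:
  fixes la lb d g ma mb u v w :: real and \<pi> :: "st \<Rightarrow> real" and z :: complex
  assumes "la > 0" "lb > 0" "d > 0" "g \<ge> 0" "ma > 0" "mb > 0"
    and "stationary la lb d g ma mb \<pi>"
    and "(la + lb)^2 * u = la * (ma - mb)"
    and "(la + lb)^2 * v = (la * ma + lb * mb) * \<pi> Empty"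
    and "(la + lb)^2 * w = (ma * mb + la * ma + lb * mb + g * ma) * \<pi> Empty"
    and "cmod z \<le> 1"
  shows "let l = la + lb; r = l / (l + d);
             \<Delta> = (l - g + ma - mb)^2 + 4 * l * g;
             zp = (ma + mb + l + g + sqrt \<Delta>) / (2 * l);
             zm = (ma + mb + l + g - sqrt \<Delta>) / (2 * l)
         in complex_of_real u * genfun \<pi> (complex_of_real r * z)
            = - (z - complex_of_real zp) * (z - complex_of_real zm) * genfun \<pi> z
              - complex_of_real v * z + complex_of_real w"
proof -
  define l where "l = la + lb"
  define \<Delta> where "\<Delta> = (l - g + ma - mb)^2 + 4 * l * g"
  have l_pos: "l > 0" using assms(1,2) by (simp add: l_def)
  have "\<Delta> \<ge> 0" using l_pos assms(4) by (simp add: \<Delta>_def)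
  have "((ma + mb + l + g)^2 - \<Delta>) / (4 * l^2) = (l * mb + ma * mb + g * ma) / l^2"
    using l_pos by (simp add: \<Delta>_def divide_simps power2_eq_square algebra_simps)
  with quadratic_root_factorization[OF \<open>\<Delta> \<ge> 0\<close>, where B = "ma + mb + l + g" and l = l and z = z]
  have roots: "(z - complex_of_real ((ma + mb + l + g + sqrt \<Delta>) / (2 * l)))
      * (z - complex_of_real ((ma + mb + l + g - sqrt \<Delta>) / (2 * l)))
    = z^2 - complex_of_real ((ma + mb + l + g) / l) * z
      + complex_of_real ((l * mb + ma * mb + g * ma) / l^2)"
    using l_pos by simp
  have "d \<ge> 0" using assms(3) by simp
  from functional_equation_expanded[OF _ this assms(7-11)] assms(1,2)
  have "complex_of_real u * genfun \<pi> (complex_of_real (l / (l + d)) * z)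
     = - (z^2 - complex_of_real ((ma + mb + l + g) / l) * z
          + complex_of_real ((l * mb + ma * mb + g * ma) / l^2)) * genfun \<pi> z
       - complex_of_real v * z + complex_of_real w"
    unfolding l_def by simp
  then show ?thesis
    unfolding Let_def l_def[symmetric] \<Delta>_def[symmetric] minus_mult_left[symmetric] roots .
qed

end
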